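(* Let $I\subset\mathbb R$ be a bounded open interval, $\lambda\in(0,\lambda_1(I))$, and $a(J)=\inf_{u\in N(J)}J(u)$ as below. Then $a(J)<\pi$.
   Context: $H:=\tilde H^{\frac12,2}(I)=\{u\in L^2(\mathbb R):(-\Delta)^{1/4}u\in L^2(\mathbb R),\ u=0\text{ a.e. in }\mathbb R\setminus I\}$, where $(-\Delta)^{1/4}$ is the fractional Laplacian ($\widehat{(-\Delta)^{1/4}u}=|\xi|^{1/2}\hat u$), with inner product $(u,v)_H=\int_{\mathbb R}(-\Delta)^{1/4}u(-\Delta)^{1/4}v\,dx$ and norm $\|u\|_H=(u,u)_H^{1/2}$. $J(u)=\frac12\|u\|_H^2-\lambda\int_I(e^{\frac12u^2}-1)dx$, $\langle J'(u),v\rangle=(u,v)_H-\lambda\int_Iuv\,e^{\frac12u^2}dx$, $N(J)=\{u\in H\setminus\{0\}:\langle J'(u),u\rangle=0\}$. $\lambda_1(I):=\min_{u\in H\setminus\{0\}}\|u\|_H^2/\int_Iu^2dx$. *)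

theory Defs
  imports "HOL-Analysis.Analysis"
begin

text \<open>Unitary Fourier transform of a real function (for compactly supported
  square integrable functions, which are integrable, this is a Lebesgue integral).\<close>
definition fourier :: "(real \<Rightarrow> real) \<Rightarrow> real \<Rightarrow> complex" where
  "fourier u \<xi> = (LINT x|lborel. complex_of_real (u x) * cis (- (x * \<xi>))) / complex_of_real (sqrt (2 * pi))"

text \<open>The space H = tilde H^{1/2,2}(I) for I = (a,b).  By Plancherel,
  (-Delta)^{1/4} u is in L^2 iff |xi|^{1/2} fourier u is in L^2.\<close>
definition Hspace :: "real \<Rightarrow> real \<Rightarrow> (real \<Rightarrow> real) set" where
  "Hspace a b = {u. u \<in> borel_measurable lborel
      \<and> integrable lborel (\<lambda>x. (u x)\<^sup>2)
      \<and> integrable lborel (\<lambda>\<xi>. \<bar>\<xi>\<bar> * (cmod (fourier u \<xi>))\<^sup>2)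
      \<and> (AE x in lborel. x \<notin> {a<..<b} \<longrightarrow> u x = 0)}"

text \<open>(u,v)_H = int (-Delta)^{1/4}u (-Delta)^{1/4}v dx, written on the Fourier side
  via Parseval: int |xi| Re(fourier u * conj(fourier v)) dxi.\<close>
definition Hinner :: "(real \<Rightarrow> real) \<Rightarrow> (real \<Rightarrow> real) \<Rightarrow> real" where
  "Hinner u v = (LINT \<xi>|lborel. \<bar>\<xi>\<bar> * Re (fourier u \<xi> * cnj (fourier v \<xi>)))"

definition Hnorm :: "(real \<Rightarrow> real) \<Rightarrow> real" where
  "Hnorm u = sqrt (Hinner u u)"

definition Hzero :: "(real \<Rightarrow> real) \<Rightarrow> bool" where
  "Hzero u \<longleftrightarrow> (AE x in lborel. u x = 0)"

definition Jfun :: "real \<Rightarrow> real \<Rightarrow> real \<Rightarrow> (real \<Rightarrow> real) \<Rightarrow> real" where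
  "Jfun a b lam u = (1/2) * (Hnorm u)\<^sup>2 - lam * (LINT x:{a<..<b}|lborel. exp ((1/2) * (u x)\<^sup>2) - 1)"

definition Jderiv :: "real \<Rightarrow> real \<Rightarrow> real \<Rightarrow> (real \<Rightarrow> real) \<Rightarrow> (real \<Rightarrow> real) \<Rightarrow> real" where
  "Jderiv a b lam u v = Hinner u v - lam * (LINT x:{a<..<b}|lborel. u x * v x * exp ((1/2) * (u x)\<^sup>2))"

definition Nehari :: "real \<Rightarrow> real \<Rightarrow> real \<Rightarrow> (real \<Rightarrow> real) set" where
  "Nehari a b lam = {u \<in> Hspace a b. \<not> Hzero u \<and> Jderiv a b lam u u = 0}"

definition lambda1 :: "real \<Rightarrow> real \<Rightarrow> real" where
  "lambda1 a b = Inf {(Hnorm u)\<^sup>2 / (LINT x:{a<..<b}|lborel. (u x)\<^sup>2) | u. u \<in> Hspace a b \<and> \<not> Hzero u}"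

definition aJ :: "real \<Rightarrow> real \<Rightarrow> real \<Rightarrow> real" where
  "aJ a b lam = Inf (Jfun a b lam ` Nehari a b lam)"

end

theory Submission
  imports Defs "HOL-Probability.Sinc_Integral"
begin

text \<open>
  We test with a one-dimensional Moser sequence. The profile \<open>moser_profile L\<close> equals 1 for
  \<open>|y| \<le> exp (-L)\<close> and \<open>ln (1/|y|) / L\<close> for \<open>exp (-L) \<le> |y| \<le> 1\<close>; its Fourier transform is
  \<open>2 (Si \<eta> - Si (exp (-L) \<eta>)) / (L \<eta>)\<close>. Bounding this difference of sine integrals by \<open>|\<eta>|\<close>,
  \<open>pi/2 + 2/|\<eta>|\<close> and \<open>2 exp L / |\<eta>|\<close> on the ranges \<open>|\<eta>| \<le> 1\<close>, \<open>1 \<le> |\<eta>| \<le> exp L\<close> and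
  \<open>exp L \<le> |\<eta>|\<close> shows that the profile rescaled to \<open>I\<close>, \<open>w\<^sub>L = moser_fun L a b\<close>, satisfies
  \<open>\<parallel>w\<^sub>L\<parallel>\<^sup>2 \<le> pi/L + K/L\<^sup>2\<close>; the leading term comes from the logarithmic middle range.

  Since \<open>\<lambda> < \<lambda>\<^sub>1(I)\<close>, the ray \<open>t \<mapsto> sqrt t \<cdot> w\<^sub>L\<close> meets the Nehari manifold at some \<open>t > 0\<close>.
  On the middle interval of length \<open>exp (-L) |I|\<close>, where \<open>w\<^sub>L = 1\<close>, the exponential part of \<open>J\<close>
  is at least \<open>\<lambda> exp (-L) |I| (exp (t/2) - 1)\<close>, so
  \<open>J (sqrt t \<cdot> w\<^sub>L) \<le> t \<parallel>w\<^sub>L\<parallel>\<^sup>2 / 2 - \<lambda> |I| exp (-L) (exp (t/2) - 1)\<close>. For large \<open>L\<close> the maximum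
  of the right-hand side over \<open>t\<close> is at most \<open>pi - pi/L + \<lambda> |I| exp (-L) < pi\<close>.
\<close>

section \<open>The sine integral\<close>

lemma abs_sinc_le_one: "\<bar>sinc x\<bar> \<le> 1"
proof (cases "x = 0")
  case False
  with abs_sin_x_le_abs_x[of x] show ?thesis by (simp add: abs_divide divide_le_eq_1)
qed simp

lemma Si_0 [simp]: "Si 0 = 0"
  using Si_neg[of 0] by simp

lemma Si_minus: "Si (- x) = - Si x"
  using Si_neg[of x] Si_neg[of "- x"] by (cases "x \<ge> 0") auto

lemma Si_lipschitz: "\<bar>Si x - Si y\<bar> \<le> \<bar>x - y\<bar>"
proof -
  have "\<bar>Si q - Si p\<bar> \<le> q - p" if "p < q" for p q
  proof -
    have "\<exists>z>p. z < q \<and> Si q - Si p = (q - p) * sinc z"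
      by (rule MVT2[OF that]) (rule DERIV_Si)
    then obtain z where "Si q - Si p = (q - p) * sinc z" by blast
    then show ?thesis
      using that abs_sinc_le_one[of z] mult_left_mono[of "\<bar>sinc z\<bar>" 1 "q - p"]
      by (simp add: abs_mult)
  qed
  then show ?thesis
    by (cases x y rule: linorder_cases) (fastforce simp: abs_minus_commute)+
qed

lemma Si_nonneg:
  assumes "0 \<le> x" "x \<le> pi"
  shows "0 \<le> Si x"
proof -
  have "Si 0 \<le> Si x"
  proof (rule DERIV_nonneg_imp_increasing_open[OF assms(1)])
    fix t assume "0 < t" "t < x"
    then have "0 \<le> sinc t" using assms sin_gt_zero[of t] by auto
    then show "\<exists>y. (Si has_real_derivative y) (at t) \<and> 0 \<le> y" using DERIV_Si by blast
  qed (intro continuous_at_imp_continuous_on ballI isCont_Si)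
  then show ?thesis by simp
qed

lemma Si_diff_le:
  assumes "0 < A" "A \<le> B"
  shows "\<bar>Si B - Si A\<bar> \<le> 2 / A"
proof -
  \<comment> \<open>integrating by parts, \<open>Si x + cos x / x\<close> has derivative \<open>- cos x / x\<^sup>2\<close>, of modulus at most \<open>1 / x\<^sup>2\<close>\<close>
  define E where "E x = Si x + cos x / x" for x
  have E': "(E has_real_derivative - cos x / x\<^sup>2) (at x)" if "0 < x" for x
  proof -
    have "(E has_real_derivative sinc x + (- sin x * x - cos x) / x\<^sup>2) (at x)"
      unfolding E_def using that
      by (auto intro!: derivative_eq_intros DERIV_Si simp: power2_eq_square)
    moreover have "sinc x + (- sin x * x - cos x) / x\<^sup>2 = - cos x / x\<^sup>2"
      using that by (simp add: field_simps power2_eq_square)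
    ultimately show ?thesis by simp
  qed
  have cont: "continuous_on {A..B} (\<lambda>x. E x + 1 / x)" "continuous_on {A..B} (\<lambda>x. E x - 1 / x)"
    using assms unfolding E_def
    by (auto intro!: continuous_intros continuous_at_imp_continuous_on isCont_Si)
  have up: "E B + 1 / B \<le> E A + 1 / A"
  proof (rule DERIV_nonpos_imp_decreasing_open[OF assms(2)])
    fix t assume t: "A < t" "t < B"
    then have "((\<lambda>x. E x + 1 / x) has_real_derivative - cos t / t\<^sup>2 - 1 / t\<^sup>2) (at t)"
      using assms by (auto intro!: derivative_eq_intros E' simp: power2_eq_square field_simps)
    moreover have "- cos t / t\<^sup>2 - 1 / t\<^sup>2 \<le> 0"
      using t assms cos_ge_minus_one[of t] by (simp add: field_simps)
    ultimately show "\<exists>y. ((\<lambda>x. E x + 1 / x) has_real_derivative y) (at t) \<and> y \<le> 0" by blast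
  qed (rule cont(1))
  have lo: "E A - 1 / A \<le> E B - 1 / B"
  proof (rule DERIV_nonneg_imp_increasing_open[OF assms(2)])
    fix t assume t: "A < t" "t < B"
    then have "((\<lambda>x. E x - 1 / x) has_real_derivative - cos t / t\<^sup>2 + 1 / t\<^sup>2) (at t)"
      using assms by (auto intro!: derivative_eq_intros E' simp: power2_eq_square field_simps)
    moreover have "0 \<le> - cos t / t\<^sup>2 + 1 / t\<^sup>2"
      using t assms cos_le_one[of t] by (simp add: field_simps)
    ultimately show "\<exists>y. ((\<lambda>x. E x - 1 / x) has_real_derivative y) (at t) \<and> 0 \<le> y" by blast
  qed (rule cont(2))
  have "\<bar>cos B / B\<bar> \<le> 1 / B" "\<bar>cos A / A\<bar> \<le> 1 / A"
    using assms abs_cos_le_one by (simp_all add: abs_divide divide_right_mono)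
  then show ?thesis using up lo unfolding E_def abs_le_iff by linarith
qed

lemma Si_minus_pi_half_le:
  assumes "0 < x"
  shows "\<bar>Si x - pi / 2\<bar> \<le> 2 / x"
proof -
  have "((\<lambda>B. \<bar>Si B - Si x\<bar>) \<longlongrightarrow> \<bar>pi / 2 - Si x\<bar>) at_top"
    by (intro tendsto_intros Si_at_top)
  moreover have "eventually (\<lambda>B. \<bar>Si B - Si x\<bar> \<le> 2 / x) at_top"
    using eventually_ge_at_top[of x] by eventually_elim (rule Si_diff_le[OF assms])
  ultimately have "\<bar>pi / 2 - Si x\<bar> \<le> 2 / x"
    by (rule tendsto_upperbound) simp
  then show ?thesis by (simp add: abs_minus_commute)
qed

lemma integral_lborel_eq_has_integral_Icc:
  fixes f :: "real \<Rightarrow> real"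
  assumes "integrable lborel f" "(f has_integral I) {a..b}" "\<And>x. x \<notin> {a..b} \<Longrightarrow> f x = 0"
  shows "integral\<^sup>L lborel f = I"
proof -
  have "(\<lambda>x. if x \<in> {a..b} then f x else 0) = f" using assms(3) by auto
  then have "(f has_integral I) UNIV"
    using assms(2) by (metis has_integral_restrict_UNIV)
  then show ?thesis
    using has_integral_integral_lborel[OF assms(1)] has_integral_unique by blast
qed

lemma set_integrable_bounded:
  fixes f :: "'a \<Rightarrow> real"
  assumes "A \<in> sets M" "emeasure M A < \<infinity>" "f \<in> borel_measurable M" "\<And>x. x \<in> A \<Longrightarrow> \<bar>f x\<bar> \<le> B"
  shows "set_integrable M A f"
  unfolding set_integrable_def using assms by (intro integrableI_bounded_set_indicator[where B = B]) auto

lemma set_integral_ge_on_Icc: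
  fixes g :: "real \<Rightarrow> real"
  assumes "A \<in> sets lborel" "emeasure lborel A < \<infinity>" "set_integrable lborel A g"
    and "\<And>x. x \<in> A \<Longrightarrow> 0 \<le> g x" "{p..q} \<subseteq> A" "p \<le> q" "0 \<le> G"
    and "\<And>x. x \<in> {p..q} \<Longrightarrow> G \<le> g x"
  shows "G * (q - p) \<le> (LINT x:A|lborel. g x)"
proof -
  have "(LINT x:A|lborel. indicator {p..q} x * G) = (LINT x:{p..q}|lborel. G)"
    using assms(5) unfolding set_lebesgue_integral_def
    by (intro Bochner_Integration.integral_cong) (auto simp: indicator_def)
  also have "\<dots> = G * (q - p)"
    using assms(6) by (simp add: set_integral_const)
  finally have "(LINT x:A|lborel. indicator {p..q} x * G) = G * (q - p)" .
  moreover have "set_integrable lborel A (\<lambda>x. indicator {p..q} x * G)"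
    using assms(1,2,7) by (intro set_integrable_bounded[where B = G]) (auto simp: indicator_def)
  then have "(LINT x:A|lborel. indicator {p..q} x * G) \<le> (LINT x:A|lborel. g x)"
    using assms(3,4,7,8) by (intro set_integral_mono) (auto simp: indicator_def)
  ultimately show ?thesis by linarith
qed

lemma lipschitz_on_set_integral_param:
  fixes f :: "real \<Rightarrow> 'a \<Rightarrow> real"
  assumes A: "A \<in> sets M" "emeasure M A < \<infinity>"
    and int: "\<And>t. t \<in> T \<Longrightarrow> set_integrable M A (f t)" and "0 \<le> C"
    and lip: "\<And>t s x. t \<in> T \<Longrightarrow> s \<in> T \<Longrightarrow> x \<in> A \<Longrightarrow> \<bar>f t x - f s x\<bar> \<le> C * \<bar>t - s\<bar>"
  shows "(C * measure M A)-lipschitz_on T (\<lambda>t. LINT x:A|M. f t x)"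
proof (rule lipschitz_onI)
  fix t s assume ts: "t \<in> T" "s \<in> T"
  have diff: "set_integrable M A (\<lambda>x. f t x - f s x)"
    using int[OF ts(1)] int[OF ts(2)] by simp
  have const: "set_integrable M A (\<lambda>x. C * \<bar>t - s\<bar>)"
    using A by (intro set_integrable_bounded[where B = "C * \<bar>t - s\<bar>"]) (use \<open>0 \<le> C\<close> in auto)
  have "dist (LINT x:A|M. f t x) (LINT x:A|M. f s x) = \<bar>LINT x:A|M. f t x - f s x\<bar>"
    using int[OF ts(1)] int[OF ts(2)] by (simp add: dist_real_def)
  also have "\<dots> \<le> (LINT x:A|M. \<bar>f t x - f s x\<bar>)"
    using set_integral_norm_bound[OF diff] by simp
  also have "\<dots> \<le> (LINT x:A|M. C * \<bar>t - s\<bar>)"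
    using lip[OF ts] by (intro set_integral_mono set_integrable_abs diff const)
  also have "\<dots> = C * measure M A * dist t s"
    using A by (simp add: set_integral_const dist_real_def ennreal_less_top)
  finally show "dist (LINT x:A|M. f t x) (LINT x:A|M. f s x) \<le> C * measure M A * dist t s" .
qed (use \<open>0 \<le> C\<close> in simp)

lemma has_integral_ln_cos:
  fixes \<eta> p q :: real
  assumes "\<eta> \<noteq> 0" "0 < p" "p \<le> q"
  defines "F \<equiv> \<lambda>y. (Si (\<eta> * y) - ln y * sin (\<eta> * y)) / \<eta>"
  shows "((\<lambda>y. - ln y * cos (\<eta> * y)) has_integral F q - F p) {p..q}"
proof (rule fundamental_theorem_of_calculus[OF \<open>p \<le> q\<close>])
  fix y assume "y \<in> {p..q}"
  then have "0 < y" using assms(2) by auto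
  have "((\<lambda>y. Si (\<eta> * y)) has_real_derivative sinc (\<eta> * y) * \<eta>) (at y)"
    by (rule DERIV_chain2[OF DERIV_Si DERIV_cmult_Id])
  then have "(F has_real_derivative
      (sinc (\<eta> * y) * \<eta> - (1 / y * sin (\<eta> * y) + ln y * (cos (\<eta> * y) * \<eta>))) / \<eta>) (at y)"
    unfolding F_def using \<open>0 < y\<close> by (auto intro!: derivative_eq_intros)
  moreover have "(sinc (\<eta> * y) * \<eta> - (1 / y * sin (\<eta> * y) + ln y * (cos (\<eta> * y) * \<eta>))) / \<eta>
      = - ln y * cos (\<eta> * y)"
    using \<open>0 < y\<close> assms(1) by (simp add: field_simps)
  ultimately show "(F has_vector_derivative - ln y * cos (\<eta> * y)) (at y within {p..q})"
    by (simp add: has_real_derivative_iff_has_vector_derivative[symmetric] has_field_derivative_at_within)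
qed

lemma has_integral_cos:
  fixes \<eta> p q :: real
  assumes "\<eta> \<noteq> 0" "p \<le> q"
  shows "((\<lambda>y. cos (\<eta> * y)) has_integral sin (\<eta> * q) / \<eta> - sin (\<eta> * p) / \<eta>) {p..q}"
proof (rule fundamental_theorem_of_calculus[OF \<open>p \<le> q\<close>])
  fix y
  have "((\<lambda>y. sin (\<eta> * y) / \<eta>) has_real_derivative cos (\<eta> * y)) (at y)"
    using assms(1) by (auto intro!: derivative_eq_intros)
  then show "((\<lambda>y. sin (\<eta> * y) / \<eta>) has_vector_derivative cos (\<eta> * y)) (at y within {p..q})"
    by (simp add: has_real_derivative_iff_has_vector_derivative[symmetric] has_field_derivative_at_within)
qed

lemma inverse_1_plus_square_lborel:
  shows integrable_inverse_1_plus_square_lborel: "integrable lborel (\<lambda>x::real. 1 / (1 + x\<^sup>2))"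
    and integral_inverse_1_plus_square_lborel: "(LINT x|lborel. 1 / (1 + x\<^sup>2)) = (pi::real)"
proof -
  have U: "einterval (-\<infinity>) \<infinity> = (UNIV :: real set)" by (auto simp: einterval_iff)
  show "integrable lborel (\<lambda>x::real. 1 / (1 + x\<^sup>2))"
    using integrable_inverse_1_plus_square unfolding set_integrable_def U
    by (simp add: inverse_eq_divide)
  show "(LINT x|lborel. 1 / (1 + x\<^sup>2)) = (pi::real)"
    using LBINT_inverse_1_plus_square
    unfolding interval_lebesgue_integral_def set_lebesgue_integral_def U
    by (simp add: inverse_eq_divide)
qed

lemma scaled_inverse_square_lborel:
  fixes M :: real
  assumes "0 < M"
  shows integrable_scaled_inverse_square_lborel: "integrable lborel (\<lambda>x. M / (M\<^sup>2 + x\<^sup>2))"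
    and integral_scaled_inverse_square_lborel: "(LINT x|lborel. M / (M\<^sup>2 + x\<^sup>2)) = pi"
proof -
  have eq: "M / (M\<^sup>2 + x\<^sup>2) = 1 / M * (1 / (1 + (0 + 1 / M * x)\<^sup>2))" for x
    using assms by (simp add: field_simps power2_eq_square add_pos_nonneg)
  have c: "1 / M \<noteq> 0" using assms by simp
  have int: "integrable lborel (\<lambda>x. 1 / (1 + (0 + 1 / M * x)\<^sup>2))"
    using lborel_integrable_real_affine_iff[OF c, of "\<lambda>y. 1 / (1 + y\<^sup>2)" 0]
      integrable_inverse_1_plus_square_lborel by simp
  then show "integrable lborel (\<lambda>x. M / (M\<^sup>2 + x\<^sup>2))"
    unfolding eq by (rule integrable_mult_right)
  have "pi = \<bar>1 / M\<bar> *\<^sub>R (LINT x|lborel. 1 / (1 + (0 + 1 / M * x)\<^sup>2))"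
    using lborel_integral_real_affine[OF c, of "\<lambda>y. 1 / (1 + y\<^sup>2)" 0]
      integral_inverse_1_plus_square_lborel by simp
  then show "(LINT x|lborel. M / (M\<^sup>2 + x\<^sup>2)) = pi"
    unfolding eq integral_mult_right_zero using assms by simp
qed

lemma truncated_abs_over_1_plus_square_lborel:
  fixes M :: real
  assumes "0 < M"
  defines "g \<equiv> \<lambda>x::real. if \<bar>x\<bar> \<le> M then \<bar>x\<bar> / (1 + x\<^sup>2) else 0"
  shows integrable_truncated_abs_over_1_plus_square: "integrable lborel g"
    and integral_truncated_abs_over_1_plus_square: "integral\<^sup>L lborel g = ln (1 + M\<^sup>2)"
proof -
  have pos: "0 < 1 + x\<^sup>2" for x :: real by (simp add: add_pos_nonneg)
  show int: "integrable lborel g"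
  proof (rule integrableI_bounded_set[where A = "{-M..M}" and B = 1])
    show "AE x in lborel. x \<in> {-M..M} \<longrightarrow> norm (g x) \<le> 1"
    proof (intro AE_I2 impI)
      fix x :: real
      have "2 * \<bar>x\<bar> * 1 \<le> 1 + x\<^sup>2"
        using sum_squares_bound[of "\<bar>x\<bar>" 1] by simp
      then show "norm (g x) \<le> 1" using pos[of x] by (simp add: g_def)
    qed
  qed (use assms in \<open>auto simp: g_def\<close>)
  have half: "(g has_integral ln (1 + M\<^sup>2) / 2) {0..M}"
  proof -
    have ftc: "((\<lambda>x. x / (1 + x\<^sup>2)) has_integral ln (1 + M\<^sup>2) / 2 - ln (1 + 0\<^sup>2) / 2) {0..M}"
    proof (rule fundamental_theorem_of_calculus)
      fix x :: real
      have "((\<lambda>x. ln (1 + x\<^sup>2) / 2) has_real_derivative x / (1 + x\<^sup>2)) (at x)"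
        using pos[of x] by (auto intro!: derivative_eq_intros simp: power2_eq_square field_simps)
      then show "((\<lambda>x. ln (1 + x\<^sup>2) / 2) has_vector_derivative x / (1 + x\<^sup>2)) (at x within {0..M})"
        by (simp add: has_real_derivative_iff_has_vector_derivative[symmetric] has_field_derivative_at_within)
    qed (use assms in simp)
    have eq: "x / (1 + x\<^sup>2) = g x" if "x \<in> {0..M}" for x
      using that by (simp add: g_def)
    show ?thesis using has_integral_eq[OF eq ftc] by simp
  qed
  have "g (- x) = g x" for x by (simp add: g_def)
  then have "(g has_integral ln (1 + M\<^sup>2) / 2) {-M..0}"
    using has_integral_reflect_real[of g, THEN iffD2, OF half] by simp
  from has_integral_combine[OF _ _ this half] have "(g has_integral ln (1 + M\<^sup>2)) {-M..M}"
    using assms by simp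
  then show "integral\<^sup>L lborel g = ln (1 + M\<^sup>2)"
    by (rule integral_lborel_eq_has_integral_Icc[OF int]) (auto simp: g_def abs_le_iff)
qed

lemma exp_diff_le: "x \<le> y \<Longrightarrow> exp y - exp x \<le> (y - x) * exp (y::real)"
  using mult_right_mono[OF exp_ge_add_one_self[of "x - y"], of "exp y"]
  by (simp add: exp_diff algebra_simps)

lemma abs_exp_diff_le:
  fixes x y M :: real
  assumes "x \<le> M" "y \<le> M"
  shows "\<bar>exp x - exp y\<bar> \<le> \<bar>x - y\<bar> * exp M"
proof -
  have *: "exp y - exp x \<le> (y - x) * exp M" if "x \<le> y" "y \<le> M" for x y :: real
    using exp_diff_le[OF that(1)] mult_left_mono[of "exp y" "exp M" "y - x"] that by simp
  show ?thesis
  proof (cases "x \<le> y")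
    case True
    have "\<bar>exp x - exp y\<bar> = exp y - exp x" "\<bar>x - y\<bar> = y - x" using True by simp_all
    with *[OF True assms(2)] show ?thesis by simp
  next
    case False
    have "\<bar>exp x - exp y\<bar> = exp x - exp y" "\<bar>x - y\<bar> = x - y" using False by simp_all
    with *[of y x] False assms(1) show ?thesis by simp
  qed
qed

lemma mult_minus_exp_le:
  fixes c B s :: real
  assumes "0 < c" "0 < B"
  shows "s * c - B * exp s \<le> c * ln (c / B) - c"
proof -
  have "1 + (s - ln (c / B)) \<le> exp (s - ln (c / B))"
    by (rule exp_ge_add_one_self)
  also have "exp (s - ln (c / B)) = B * exp s / c"
    using assms by (simp add: exp_diff)
  finally have "c * (1 + (s - ln (c / B))) \<le> B * exp s"
    using assms by (simp add: field_simps)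
  then show ?thesis by (simp add: algebra_simps)
qed

section \<open>The Moser profile and its Fourier transform\<close>

definition moser_profile :: "real \<Rightarrow> real \<Rightarrow> real" where
  "moser_profile L y = (if \<bar>y\<bar> \<le> exp (- L) then 1 else if \<bar>y\<bar> < 1 then - ln \<bar>y\<bar> / L else 0)"

lemma moser_profile_measurable [measurable]: "moser_profile L \<in> borel_measurable borel"
  unfolding moser_profile_def[abs_def] by measurable

lemma moser_profile_minus: "moser_profile L (- y) = moser_profile L y"
  by (simp add: moser_profile_def)

lemma moser_profile_eq_1: "\<bar>y\<bar> \<le> exp (- L) \<Longrightarrow> moser_profile L y = 1"
  by (simp add: moser_profile_def)

lemma moser_profile_eq_ln:
  assumes "0 < L" "exp (- L) \<le> \<bar>y\<bar>" "\<bar>y\<bar> \<le> 1"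
  shows "moser_profile L y = - ln \<bar>y\<bar> / L"
  using assms by (cases "\<bar>y\<bar> = exp (- L)"; cases "\<bar>y\<bar> = 1") (auto simp: moser_profile_def)

lemma moser_profile_eq_0:
  assumes "0 < L" "1 \<le> \<bar>y\<bar>"
  shows "moser_profile L y = 0"
proof -
  have "exp (- L) < 1" using assms(1) by simp
  then have "\<not> \<bar>y\<bar> \<le> exp (- L)" "\<not> \<bar>y\<bar> < 1" using assms(2) by linarith+
  then show ?thesis by (simp add: moser_profile_def)
qed

lemma moser_profile_bounds:
  assumes "0 < L"
  shows "0 \<le> moser_profile L y" "moser_profile L y \<le> 1"
proof -
  have "0 \<le> - ln \<bar>y\<bar> / L \<and> - ln \<bar>y\<bar> / L \<le> 1" if "exp (- L) < \<bar>y\<bar>" "\<bar>y\<bar> < 1"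
  proof -
    have "0 < \<bar>y\<bar>" using that exp_gt_zero[of "- L"] by linarith
    then have "ln (exp (- L)) < ln \<bar>y\<bar>" "ln \<bar>y\<bar> < 0"
      using that by (simp_all only: ln_less_cancel_iff exp_gt_zero ln_less_zero)
    then show ?thesis using assms by (simp add: field_simps)
  qed
  then show "0 \<le> moser_profile L y" "moser_profile L y \<le> 1"
    by (auto simp: moser_profile_def)
qed

lemma integrable_moser_profile_mult:
  fixes g :: "real \<Rightarrow> 'a::{banach, second_countable_topology, real_normed_div_algebra}"
  assumes "0 < L" "g \<in> borel_measurable borel" "\<And>y. norm (g y) \<le> 1"
  shows "integrable lborel (\<lambda>y. of_real (moser_profile L y) * g y)"
proof (rule integrableI_bounded_set[where A = "{-1..1}" and B = 1])
  show "AE y in lborel. y \<in> {-1..1} \<longrightarrow> norm (of_real (moser_profile L y) * g y) \<le> 1"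
  proof (intro AE_I2 impI)
    fix y
    have "\<bar>moser_profile L y\<bar> \<le> 1"
      using moser_profile_bounds[OF assms(1), of y] by simp
    then show "norm (of_real (moser_profile L y) * g y) \<le> 1"
      using assms(3)[of y] by (simp add: norm_mult mult_le_one)
  qed
  show "AE y in lborel. y \<notin> {-1..1} \<longrightarrow> of_real (moser_profile L y) * g y = 0"
    using moser_profile_eq_0[OF assms(1)] by (intro AE_I2) auto
  show "(\<lambda>y. of_real (moser_profile L y) * g y) \<in> borel_measurable lborel"
    using assms(2) by measurable
qed simp_all

lemma moser_profile_cos_has_integral_0_1:
  assumes "0 < L" "\<eta> \<noteq> 0"
  shows "((\<lambda>y. moser_profile L y * cos (\<eta> * y)) has_integral
    (Si \<eta> - Si (exp (- L) * \<eta>)) / (L * \<eta>)) {0..1}"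
proof -
  define m where "m = exp (- L)"
  have m: "0 < m" "m < 1" "ln m = - L" using assms(1) by (auto simp: m_def)
  define F where "F y = (Si (\<eta> * y) - ln y * sin (\<eta> * y)) / \<eta>" for y
  have "1 / L * (- ln y * cos (\<eta> * y)) = moser_profile L y * cos (\<eta> * y)" if "y \<in> {m..1}" for y
  proof -
    have "0 < y" using that exp_gt_zero[of "- L"] unfolding m_def atLeastAtMost_iff by linarith
    then have "exp (- L) \<le> \<bar>y\<bar>" "\<bar>y\<bar> \<le> 1" using that by (auto simp: m_def)
    with \<open>0 < y\<close> show ?thesis using moser_profile_eq_ln[OF assms(1)] by simp
  qed
  moreover have "((\<lambda>y. 1 / L * (- ln y * cos (\<eta> * y))) has_integral 1 / L * (F 1 - F m)) {m..1}"
    unfolding F_def using m assms(2) by (intro has_integral_mult_right has_integral_ln_cos) auto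
  ultimately have outer: "((\<lambda>y. moser_profile L y * cos (\<eta> * y)) has_integral 1 / L * (F 1 - F m)) {m..1}"
    by (rule has_integral_eq)
  have "cos (\<eta> * y) = moser_profile L y * cos (\<eta> * y)" if "y \<in> {0..m}" for y
    using that by (simp add: moser_profile_eq_1 m_def)
  moreover have "((\<lambda>y. cos (\<eta> * y)) has_integral sin (\<eta> * m) / \<eta>) {0..m}"
    using has_integral_cos[OF assms(2), of 0 m] m(1) by simp
  ultimately have inner: "((\<lambda>y. moser_profile L y * cos (\<eta> * y)) has_integral sin (\<eta> * m) / \<eta>) {0..m}"
    by (rule has_integral_eq)
  have integral: "((\<lambda>y. moser_profile L y * cos (\<eta> * y)) has_integral
      sin (\<eta> * m) / \<eta> + 1 / L * (F 1 - F m)) {0..1}"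
    using m by (intro has_integral_combine[OF _ _ inner outer]) auto
  have "F 1 = Si \<eta> / \<eta>" "F m = (Si (\<eta> * m) + L * sin (\<eta> * m)) / \<eta>"
    using m by (simp_all add: F_def)
  then have "sin (\<eta> * m) / \<eta> + 1 / L * (F 1 - F m) = (Si \<eta> - Si (exp (- L) * \<eta>)) / (L * \<eta>)"
    using assms by (simp add: m_def mult.commute field_simps)
  with integral show ?thesis by simp
qed

lemma moser_profile_cos_has_integral:
  assumes "0 < L" "\<eta> \<noteq> 0"
  shows "((\<lambda>y. moser_profile L y * cos (\<eta> * y)) has_integral
    2 * (Si \<eta> - Si (exp (- L) * \<eta>)) / (L * \<eta>)) {-1..1}"
proof -
  note right = moser_profile_cos_has_integral_0_1[OF assms]
  have left: "((\<lambda>y. moser_profile L y * cos (\<eta> * y)) has_integral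
      (Si \<eta> - Si (exp (- L) * \<eta>)) / (L * \<eta>)) {-1..0}"
    using has_integral_reflect_real[THEN iffD2, OF right] by (simp add: moser_profile_minus)
  show ?thesis
    using has_integral_combine[OF _ _ left right] by simp
qed

lemma moser_profile_cos_integral:
  assumes "0 < L" "\<eta> \<noteq> 0"
  shows "(LINT y|lborel. moser_profile L y * cos (\<eta> * y)) = 2 * (Si \<eta> - Si (exp (- L) * \<eta>)) / (L * \<eta>)"
proof (rule integral_lborel_eq_has_integral_Icc[OF _ moser_profile_cos_has_integral[OF assms]])
  show "integrable lborel (\<lambda>y. moser_profile L y * cos (\<eta> * y))"
    using integrable_moser_profile_mult[OF assms(1), of "\<lambda>y. cos (\<eta> * y)"] by simp
  fix y :: real
  assume "y \<notin> {-1..1}"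
  then show "moser_profile L y * cos (\<eta> * y) = 0"
    using moser_profile_eq_0[OF assms(1), of y] by auto
qed

lemma moser_profile_sin_integral: "(LINT y|lborel. moser_profile L y * sin (\<eta> * y)) = 0"
proof -
  have "(LINT y|lborel. moser_profile L y * sin (\<eta> * y))
      = \<bar>- 1\<bar> *\<^sub>R (LINT y|lborel. moser_profile L (0 + - 1 * y) * sin (\<eta> * (0 + - 1 * y)))"
    by (rule lborel_integral_real_affine) simp
  also have "\<dots> = - (LINT y|lborel. moser_profile L y * sin (\<eta> * y))"
    by (simp add: moser_profile_minus)
  finally show ?thesis by simp
qed

lemma moser_profile_fourier_integral:
  assumes "0 < L" "\<eta> \<noteq> 0"
  shows "(LINT y|lborel. complex_of_real (moser_profile L y) * cis (- (\<eta> * y)))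
    = complex_of_real (2 * (Si \<eta> - Si (exp (- L) * \<eta>)) / (L * \<eta>))"
proof -
  let ?f = "\<lambda>y. complex_of_real (moser_profile L y) * cis (- (\<eta> * y))"
  have "(\<lambda>y. cis (- (\<eta> * y))) \<in> borel_measurable borel"
    by (intro borel_measurable_continuous_onI continuous_intros)
  then have int: "integrable lborel ?f"
    by (rule integrable_moser_profile_mult[OF assms(1)]) simp
  have "Re (integral\<^sup>L lborel ?f) = 2 * (Si \<eta> - Si (exp (- L) * \<eta>)) / (L * \<eta>)"
    using integral_Re[OF int, symmetric] moser_profile_cos_integral[OF assms] by simp
  moreover have "Im (integral\<^sup>L lborel ?f) = 0"
    using integral_Im[OF int, symmetric] moser_profile_sin_integral[of L \<eta>] by simp
  ultimately show ?thesis by (simp add: complex_eq_iff)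
qed

section \<open>The energy density of the Moser profile\<close>

definition moser_energy_density :: "real \<Rightarrow> real \<Rightarrow> real" where
  "moser_energy_density L \<eta> = (Si \<eta> - Si (exp (- L) * \<eta>))\<^sup>2 / \<bar>\<eta>\<bar>"

definition moser_majorant :: "real \<Rightarrow> real \<Rightarrow> real" where
  "moser_majorant L \<eta> = pi\<^sup>2 / 4 * (if \<bar>\<eta>\<bar> \<le> exp L then \<bar>\<eta>\<bar> / (1 + \<eta>\<^sup>2) else 0)
     + (pi\<^sup>2 / 4 + 4 * pi + 8) / (1 + \<eta>\<^sup>2) + 8 * exp L / ((exp L)\<^sup>2 + \<eta>\<^sup>2)"

lemma moser_energy_density_measurable [measurable]: "moser_energy_density L \<in> borel_measurable borel"
  unfolding moser_energy_density_def[abs_def] by measurable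

lemma moser_energy_density_nonneg: "0 \<le> moser_energy_density L \<eta>"
  by (simp add: moser_energy_density_def)

lemma moser_energy_density_minus: "moser_energy_density L (- \<eta>) = moser_energy_density L \<eta>"
proof -
  have "Si (- \<eta>) - Si (exp (- L) * - \<eta>) = - (Si \<eta> - Si (exp (- L) * \<eta>))"
    using Si_minus[of "exp (- L) * \<eta>"] by (simp add: Si_minus)
  then show ?thesis
    unfolding moser_energy_density_def by (simp only: power2_minus abs_minus_cancel)
qed

lemma moser_majorant_nonneg: "0 \<le> moser_majorant L \<eta>"
  unfolding moser_majorant_def using pi_gt_zero
  by (intro add_nonneg_nonneg) (auto intro!: divide_nonneg_pos add_pos_nonneg)

lemma moser_majorant_minus: "moser_majorant L (- \<eta>) = moser_majorant L \<eta>"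
  by (simp add: moser_majorant_def)

lemma moser_energy_density_le_near_0:
  assumes "0 < L" "0 < \<eta>" "\<eta> \<le> 1"
  shows "moser_energy_density L \<eta> \<le> 2 / (1 + \<eta>\<^sup>2)"
proof -
  have "0 \<le> exp (- L) * \<eta>" "exp (- L) * \<eta> \<le> \<eta>"
    using assms by (simp_all add: mult_left_le_one_le)
  then have "\<bar>Si \<eta> - Si (exp (- L) * \<eta>)\<bar> \<le> \<eta>"
    using Si_lipschitz[of \<eta> "exp (- L) * \<eta>"] by arith
  then have "(Si \<eta> - Si (exp (- L) * \<eta>))\<^sup>2 \<le> \<eta>\<^sup>2"
    using assms(2) by (simp add: power2_le_iff_abs_le)
  then have "moser_energy_density L \<eta> \<le> \<eta>\<^sup>2 / \<eta>"
    unfolding moser_energy_density_def using assms(2) by (simp add: divide_right_mono)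
  also have "\<dots> \<le> 2 / (1 + \<eta>\<^sup>2)"
    using assms(2,3) mult_mono[of \<eta> 1 "1 + \<eta>\<^sup>2" 2] mult_le_one[of \<eta> \<eta>]
    by (simp add: power2_eq_square le_divide_eq add_pos_nonneg power_le_one)
  finally show ?thesis .
qed

lemma moser_energy_density_le_mid:
  assumes "0 < L" "1 < \<eta>" "\<eta> \<le> exp L"
  shows "moser_energy_density L \<eta> \<le> pi\<^sup>2 / 4 * (\<eta> / (1 + \<eta>\<^sup>2)) + (pi\<^sup>2 / 4 + 4 * pi + 8) / (1 + \<eta>\<^sup>2)"
proof -
  have small: "0 \<le> exp (- L) * \<eta>" "exp (- L) * \<eta> \<le> 1"
    using assms by (auto simp: exp_minus field_simps)
  have "0 \<le> Si (exp (- L) * \<eta>)" using small pi_gt3 by (intro Si_nonneg) auto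
  moreover have "Si (exp (- L) * \<eta>) \<le> 1" using Si_lipschitz[of "exp (- L) * \<eta>" 0] small by simp
  moreover have "\<bar>Si \<eta> - pi / 2\<bar> \<le> 2 / \<eta>" using Si_minus_pi_half_le assms(2) by simp
  moreover have "0 < 2 / \<eta>" using assms(2) by simp
  ultimately have "\<bar>Si \<eta> - Si (exp (- L) * \<eta>)\<bar> \<le> pi / 2 + 2 / \<eta>"
    using pi_gt3 unfolding abs_le_iff by linarith
  then have "(Si \<eta> - Si (exp (- L) * \<eta>))\<^sup>2 \<le> (pi / 2 + 2 / \<eta>)\<^sup>2"
    using assms(2) pi_gt_zero by (simp add: power2_le_iff_abs_le)
  then have "moser_energy_density L \<eta> \<le> (pi / 2 + 2 / \<eta>)\<^sup>2 / \<eta>"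
    unfolding moser_energy_density_def using assms(2) by (simp add: divide_right_mono)
  also have "\<dots> = pi\<^sup>2 / 4 * (1 / \<eta>) + 2 * pi * (1 / \<eta>\<^sup>2) + 4 * (1 / \<eta> ^ 3)"
    using assms(2) by (simp add: field_simps power2_eq_square power3_eq_cube)
  also have "\<dots> \<le> pi\<^sup>2 / 4 * (\<eta> / (1 + \<eta>\<^sup>2) + 1 / (1 + \<eta>\<^sup>2)) + 2 * pi * (2 / (1 + \<eta>\<^sup>2))
      + 4 * (2 / (1 + \<eta>\<^sup>2))"
  proof -
    have d: "0 < 1 + \<eta>\<^sup>2" by (simp add: add_pos_nonneg)
    have "1 / \<eta> \<le> (\<eta> + 1) / (1 + \<eta>\<^sup>2)"
      using assms(2) d by (simp add: divide_simps power2_eq_square algebra_simps)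
    then have "1 / \<eta> \<le> \<eta> / (1 + \<eta>\<^sup>2) + 1 / (1 + \<eta>\<^sup>2)"
      by (simp add: add_divide_distrib)
    moreover have sq: "1 / \<eta>\<^sup>2 \<le> 2 / (1 + \<eta>\<^sup>2)"
      using assms(2) d mult_mono[of 1 \<eta> 1 \<eta>] by (simp add: divide_simps power2_eq_square)
    moreover have "1 / \<eta> ^ 3 \<le> 1 / \<eta>\<^sup>2"
      using assms(2) by (intro divide_left_mono) (auto simp: power2_eq_square power3_eq_cube)
    ultimately show ?thesis using pi_gt3 sq by (intro add_mono mult_left_mono) auto
  qed
  also have "\<dots> = pi\<^sup>2 / 4 * (\<eta> / (1 + \<eta>\<^sup>2)) + (pi\<^sup>2 / 4 + 4 * pi + 8) / (1 + \<eta>\<^sup>2)"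
  proof -
    have "pi\<^sup>2 / 4 * (\<eta> / d + 1 / d) + 2 * pi * (2 / d) + 4 * (2 / d)
        = pi\<^sup>2 / 4 * (\<eta> / d) + (pi\<^sup>2 / 4 + 4 * pi + 8) / d" for d :: real
      by (simp add: algebra_simps add_divide_distrib)
    then show ?thesis .
  qed
  finally show ?thesis .
qed

lemma moser_energy_density_le_far:
  assumes "0 < L" "exp L \<le> \<eta>"
  shows "moser_energy_density L \<eta> \<le> 8 * exp L / ((exp L)\<^sup>2 + \<eta>\<^sup>2)"
proof -
  define M where "M = exp L"
  have M: "1 < M" "M \<le> \<eta>" using assms by (simp_all add: M_def)
  have "0 < \<eta>" using M by linarith
  then have "exp (- L) * \<eta> \<le> \<eta>" "0 < exp (- L) * \<eta>"
    using assms(1) by (simp_all add: mult_left_le_one_le)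
  then have "\<bar>Si \<eta> - Si (exp (- L) * \<eta>)\<bar> \<le> 2 / (exp (- L) * \<eta>)"
    by (intro Si_diff_le)
  also have "2 / (exp (- L) * \<eta>) = 2 * M / \<eta>"
    using \<open>0 < \<eta>\<close> by (simp add: M_def exp_minus field_simps)
  finally have "\<bar>Si \<eta> - Si (exp (- L) * \<eta>)\<bar> \<le> 2 * M / \<eta>" .
  then have "(Si \<eta> - Si (exp (- L) * \<eta>))\<^sup>2 \<le> (2 * M / \<eta>)\<^sup>2"
    using M by (simp add: power2_le_iff_abs_le)
  then have "moser_energy_density L \<eta> \<le> (2 * M / \<eta>)\<^sup>2 / \<eta>"
    unfolding moser_energy_density_def using M by (simp add: divide_right_mono)
  also have "\<dots> \<le> 8 * M / (M\<^sup>2 + \<eta>\<^sup>2)"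
  proof -
    have "M ^ 3 \<le> \<eta> ^ 3" "M * \<eta>\<^sup>2 \<le> \<eta> * \<eta>\<^sup>2"
      using M by (auto intro: power_mono mult_right_mono)
    then have "M * (M\<^sup>2 + \<eta>\<^sup>2) \<le> 2 * \<eta> ^ 3"
      by (simp add: power2_eq_square power3_eq_cube algebra_simps)
    then have "4 * M * (M * (M\<^sup>2 + \<eta>\<^sup>2)) \<le> 4 * M * (2 * \<eta> ^ 3)"
      using M by (intro mult_left_mono) auto
    then show ?thesis
      using M by (simp add: field_simps power2_eq_square power3_eq_cube add_pos_pos)
  qed
  finally show ?thesis by (simp add: M_def)
qed

lemma moser_energy_density_le_majorant:
  assumes "0 < L"
  shows "moser_energy_density L \<eta> \<le> moser_majorant L \<eta>"
proof -
  have pos: "moser_energy_density L \<eta> \<le> moser_majorant L \<eta>" if "0 < \<eta>" for \<eta>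
  proof -
    have t1: "0 \<le> pi\<^sup>2 / 4 * (if \<bar>\<eta>\<bar> \<le> exp L then \<bar>\<eta>\<bar> / (1 + \<eta>\<^sup>2) else 0)"
      by auto
    have t2: "0 \<le> (pi\<^sup>2 / 4 + 4 * pi + 8) / (1 + \<eta>\<^sup>2)"
      using pi_gt_zero by (intro divide_nonneg_pos) (auto simp: add_pos_nonneg)
    have t3: "0 \<le> 8 * exp L / ((exp L)\<^sup>2 + \<eta>\<^sup>2)"
      by (simp add: add_pos_nonneg)
    consider "\<eta> \<le> 1" | "1 < \<eta>" "\<eta> \<le> exp L" | "exp L \<le> \<eta>" by linarith
    then show ?thesis
    proof cases
      case 1
      have "2 \<le> pi\<^sup>2 / 4 + 4 * pi + 8" using pi_gt_zero by (simp add: add_increasing)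
      then have "2 / (1 + \<eta>\<^sup>2) \<le> (pi\<^sup>2 / 4 + 4 * pi + 8) / (1 + \<eta>\<^sup>2)"
        by (simp add: divide_right_mono add_pos_nonneg)
      then show ?thesis
        using moser_energy_density_le_near_0[OF assms that 1] t1 t3 unfolding moser_majorant_def by linarith
    next
      case 2
      then have "moser_majorant L \<eta> = pi\<^sup>2 / 4 * (\<eta> / (1 + \<eta>\<^sup>2)) + (pi\<^sup>2 / 4 + 4 * pi + 8) / (1 + \<eta>\<^sup>2)
          + 8 * exp L / ((exp L)\<^sup>2 + \<eta>\<^sup>2)"
        by (simp add: moser_majorant_def)
      then show ?thesis using moser_energy_density_le_mid[OF assms 2] t3 by linarith
    next
      case 3
      then show ?thesis
        using moser_energy_density_le_far[OF assms 3] t1 t2 unfolding moser_majorant_def by linarith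
    qed
  qed
  consider "0 < \<eta>" | "\<eta> = 0" | "\<eta> < 0" by linarith
  then show ?thesis
  proof cases
    case 3
    then show ?thesis
      using pos[of "- \<eta>"] by (simp add: moser_energy_density_minus moser_majorant_minus)
  qed (use pos moser_majorant_nonneg in \<open>auto simp: moser_energy_density_def\<close>)
qed

lemma moser_majorant_lborel:
  assumes "0 < L"
  shows integrable_moser_majorant: "integrable lborel (moser_majorant L)"
    and integral_moser_majorant: "integral\<^sup>L lborel (moser_majorant L)
      = pi\<^sup>2 / 4 * ln (1 + (exp L)\<^sup>2) + (pi\<^sup>2 / 4 + 4 * pi + 8) * pi + 8 * pi"
proof -
  let ?g = "\<lambda>x::real. if \<bar>x\<bar> \<le> exp L then \<bar>x\<bar> / (1 + x\<^sup>2) else 0"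
  let ?a = "\<lambda>x. pi\<^sup>2 / 4 * ?g x"
  let ?b = "\<lambda>x::real. (pi\<^sup>2 / 4 + 4 * pi + 8) * (1 / (1 + x\<^sup>2))"
  let ?c = "\<lambda>x::real. 8 * (exp L / ((exp L)\<^sup>2 + x\<^sup>2))"
  have eq: "moser_majorant L = (\<lambda>x. ?a x + ?b x + ?c x)"
    by (simp add: moser_majorant_def fun_eq_iff)
  have ia: "integrable lborel ?a"
    by (intro integrable_mult_right integrable_truncated_abs_over_1_plus_square) simp
  have ib: "integrable lborel ?b"
    by (intro integrable_mult_right integrable_inverse_1_plus_square_lborel)
  have ic: "integrable lborel ?c"
    by (intro integrable_mult_right integrable_scaled_inverse_square_lborel) simp
  show "integrable lborel (moser_majorant L)"
    unfolding eq using ia ib ic by simp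
  have "integral\<^sup>L lborel (moser_majorant L) = integral\<^sup>L lborel ?a + integral\<^sup>L lborel ?b + integral\<^sup>L lborel ?c"
    unfolding eq using ia ib ic by simp
  also have "\<dots> = pi\<^sup>2 / 4 * ln (1 + (exp L)\<^sup>2) + (pi\<^sup>2 / 4 + 4 * pi + 8) * pi + 8 * pi"
    by (simp only: integral_mult_right_zero integral_truncated_abs_over_1_plus_square[OF exp_gt_zero]
      integral_inverse_1_plus_square_lborel integral_scaled_inverse_square_lborel[OF exp_gt_zero])
  finally show "integral\<^sup>L lborel (moser_majorant L)
      = pi\<^sup>2 / 4 * ln (1 + (exp L)\<^sup>2) + (pi\<^sup>2 / 4 + 4 * pi + 8) * pi + 8 * pi" .
qed

lemma moser_energy_density_lborel:
  assumes "0 < L"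
  shows integrable_moser_energy_density: "integrable lborel (moser_energy_density L)"
    and integral_moser_energy_density_le: "integral\<^sup>L lborel (moser_energy_density L)
      \<le> pi\<^sup>2 / 2 * L + (pi\<^sup>2 / 4 + (pi\<^sup>2 / 4 + 4 * pi + 8) * pi + 8 * pi)"
proof -
  show int: "integrable lborel (moser_energy_density L)"
  proof (rule Bochner_Integration.integrable_bound[OF integrable_moser_majorant[OF assms]])
    show "AE x in lborel. norm (moser_energy_density L x) \<le> norm (moser_majorant L x)"
      using moser_energy_density_le_majorant[OF assms] moser_energy_density_nonneg moser_majorant_nonneg
      by (intro AE_I2) simp
  qed simp
  have "integral\<^sup>L lborel (moser_energy_density L) \<le> integral\<^sup>L lborel (moser_majorant L)"
    by (intro integral_mono int integrable_moser_majorant assms moser_energy_density_le_majorant)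
  moreover have "ln (1 + (exp L)\<^sup>2) \<le> 2 * L + 1"
  proof -
    have "1 \<le> (exp L)\<^sup>2" using assms by (simp add: one_le_power)
    moreover have "2 * (exp L)\<^sup>2 \<le> exp 1 * (exp L)\<^sup>2"
      using exp_ge_add_one_self[of 1] by (intro mult_right_mono) auto
    ultimately have "1 + (exp L)\<^sup>2 \<le> exp 1 * (exp L)\<^sup>2" by linarith
    also have "\<dots> = exp (1 + (L + L))"
      by (simp only: exp_add power2_eq_square)
    finally have "ln (1 + (exp L)\<^sup>2) \<le> 1 + (L + L)"
      by (subst ln_exp[symmetric]) (simp only: ln_le_cancel_iff add_pos_nonneg zero_less_one
        zero_le_power2 exp_gt_zero)
    then show ?thesis by simp
  qed
  ultimately show "integral\<^sup>L lborel (moser_energy_density L)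
      \<le> pi\<^sup>2 / 2 * L + (pi\<^sup>2 / 4 + (pi\<^sup>2 / 4 + 4 * pi + 8) * pi + 8 * pi)"
    using mult_left_mono[of _ _ "pi\<^sup>2 / 4", OF \<open>ln _ \<le> _\<close>]
    by (simp add: integral_moser_majorant[OF assms] algebra_simps)
qed

section \<open>The space H and the functional J\<close>

lemma Re_mult_cnj: "Re (z * cnj z) = (cmod z)\<^sup>2"
  using complex_norm_square[of z] by (metis Re_complex_of_real)

lemma Hinner_nonneg: "0 \<le> Hinner u u"
  unfolding Hinner_def Re_mult_cnj by (intro Bochner_Integration.integral_nonneg) auto

lemma Hnorm_power2: "(Hnorm u)\<^sup>2 = Hinner u u"
  unfolding Hnorm_def using Hinner_nonneg by simp

lemma fourier_cmult: "fourier (\<lambda>x. s * u x) \<xi> = complex_of_real s * fourier u \<xi>"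
proof -
  have "(LINT x|lborel. complex_of_real (s * u x) * cis (- (x * \<xi>)))
      = (LINT x|lborel. complex_of_real s * (complex_of_real (u x) * cis (- (x * \<xi>))))"
    by (simp add: mult.assoc)
  also have "\<dots> = complex_of_real s * (LINT x|lborel. complex_of_real (u x) * cis (- (x * \<xi>)))"
    by (rule integral_mult_right_zero)
  finally show ?thesis unfolding fourier_def by simp
qed

lemma Hinner_integrand_cmult:
  "\<bar>\<xi>\<bar> * (cmod (fourier (\<lambda>x. s * u x) \<xi>))\<^sup>2 = s\<^sup>2 * (\<bar>\<xi>\<bar> * (cmod (fourier u \<xi>))\<^sup>2)"
  by (simp add: fourier_cmult norm_mult power_mult_distrib)

lemma Hinner_cmult: "Hinner (\<lambda>x. s * u x) (\<lambda>x. s * u x) = s\<^sup>2 * Hinner u u"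
  unfolding Hinner_def Re_mult_cnj Hinner_integrand_cmult by (rule integral_mult_right_zero)

lemma Hspace_cmult:
  assumes "u \<in> Hspace a b"
  shows "(\<lambda>x. s * u x) \<in> Hspace a b"
proof -
  have m: "u \<in> borel_measurable lborel" and i1: "integrable lborel (\<lambda>x. (u x)\<^sup>2)"
    and i2: "integrable lborel (\<lambda>\<xi>. \<bar>\<xi>\<bar> * (cmod (fourier u \<xi>))\<^sup>2)"
    and ae: "AE x in lborel. x \<notin> {a<..<b} \<longrightarrow> u x = 0"
    using assms by (auto simp: Hspace_def)
  have "integrable lborel (\<lambda>x. (s * u x)\<^sup>2)"
    using integrable_mult_right[OF i1, of "s\<^sup>2"] by (simp add: power_mult_distrib)
  moreover have "integrable lborel (\<lambda>\<xi>. \<bar>\<xi>\<bar> * (cmod (fourier (\<lambda>x. s * u x) \<xi>))\<^sup>2)"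
    unfolding Hinner_integrand_cmult by (rule integrable_mult_right[OF i2])
  moreover have "AE x in lborel. x \<notin> {a<..<b} \<longrightarrow> s * u x = 0"
    using ae by eventually_elim simp
  ultimately show ?thesis using m by (simp add: Hspace_def)
qed

lemma set_integral_square_pos:
  assumes "u \<in> Hspace a b" "\<not> Hzero u"
  shows "0 < (LINT x:{a<..<b}|lborel. (u x)\<^sup>2)"
proof -
  have int: "integrable lborel (\<lambda>x. (u x)\<^sup>2)" and ae: "AE x in lborel. x \<notin> {a<..<b} \<longrightarrow> u x = 0"
    using assms(1) by (auto simp: Hspace_def)
  have int_I: "integrable lborel (\<lambda>x. indicator {a<..<b} x *\<^sub>R (u x)\<^sup>2)"
    by (rule integrable_mult_indicator[OF _ int]) simp
  have "0 \<le> (LINT x:{a<..<b}|lborel. (u x)\<^sup>2)"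
    unfolding set_lebesgue_integral_def by (intro Bochner_Integration.integral_nonneg) auto
  moreover have "(LINT x:{a<..<b}|lborel. (u x)\<^sup>2) \<noteq> 0"
  proof
    assume "(LINT x:{a<..<b}|lborel. (u x)\<^sup>2) = 0"
    then have "AE x in lborel. indicator {a<..<b} x *\<^sub>R (u x)\<^sup>2 = 0"
      unfolding set_lebesgue_integral_def
      by (subst integral_nonneg_eq_0_iff_AE[OF int_I, symmetric]) auto
    then have "AE x in lborel. u x = 0"
      using ae by eventually_elim (auto split: split_indicator_asm)
    then show False using assms(2) by (simp add: Hzero_def)
  qed
  ultimately show ?thesis by linarith
qed

lemma lambda1_le_Rayleigh_quotient:
  assumes "u \<in> Hspace a b" "\<not> Hzero u"
  shows "lambda1 a b \<le> (Hnorm u)\<^sup>2 / (LINT x:{a<..<b}|lborel. (u x)\<^sup>2)"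
  unfolding lambda1_def
proof (rule cInf_lower)
  show "bdd_below {(Hnorm u)\<^sup>2 / (LINT x:{a<..<b}|lborel. (u x)\<^sup>2) | u. u \<in> Hspace a b \<and> \<not> Hzero u}"
  proof (rule bdd_belowI[of _ 0], clarify)
    fix v :: "real \<Rightarrow> real"
    have "0 \<le> (LINT x:{a<..<b}|lborel. (v x)\<^sup>2)"
      unfolding set_lebesgue_integral_def by (intro Bochner_Integration.integral_nonneg) auto
    then show "0 \<le> (Hnorm v)\<^sup>2 / (LINT x:{a<..<b}|lborel. (v x)\<^sup>2)" by simp
  qed
qed (use assms in blast)

lemma lambda_integral_square_less_Hinner:
  assumes "lam < lambda1 a b" "u \<in> Hspace a b" "\<not> Hzero u"
  shows "lam * (LINT x:{a<..<b}|lborel. (u x)\<^sup>2) < Hinner u u"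
proof -
  have "lam < Hinner u u / (LINT x:{a<..<b}|lborel. (u x)\<^sup>2)"
    using lambda1_le_Rayleigh_quotient[OF assms(2,3)] assms(1) unfolding Hnorm_power2 by linarith
  then show ?thesis
    using set_integral_square_pos[OF assms(2,3)] by (simp add: less_divide_eq)
qed

lemma Jfun_nonneg_Nehari:
  assumes "0 < lam" "lam < lambda1 a b" "u \<in> Nehari a b lam"
  shows "0 \<le> Jfun a b lam u"
proof -
  have uH: "u \<in> Hspace a b" and nz: "\<not> Hzero u" and J: "Jderiv a b lam u u = 0"
    using assms(3) by (auto simp: Nehari_def)
  let ?P = "LINT x:{a<..<b}|lborel. u x * u x * exp ((1/2) * (u x)\<^sup>2)"
  let ?E = "LINT x:{a<..<b}|lborel. exp ((1/2) * (u x)\<^sup>2) - 1"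
  have HP: "Hinner u u = lam * ?P" using J by (simp add: Jderiv_def)
  have "0 < lam * (LINT x:{a<..<b}|lborel. (u x)\<^sup>2)"
    using set_integral_square_pos[OF uH nz] assms(1) by simp
  then have "0 < Hinner u u"
    using lambda_integral_square_less_Hinner[OF assms(2) uH nz] by linarith
  then have P: "0 < ?P" using HP assms(1) by (simp add: zero_less_mult_iff)
  \<comment> \<open>the pointwise bound \<open>exp s - 1 \<le> s * exp s\<close> for \<open>s = u\<^sup>2 / 2\<close> gives \<open>?E \<le> ?P / 2\<close>\<close>
  have "?E \<le> ?P / 2"
  proof (cases "set_integrable lborel {a<..<b} (\<lambda>x. exp ((1/2) * (u x)\<^sup>2) - 1)")
    case True
    have "set_integrable lborel {a<..<b} (\<lambda>x. u x * u x * exp ((1/2) * (u x)\<^sup>2))"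
      using P not_integrable_integral_eq[of lborel "\<lambda>x. indicator {a<..<b} x *\<^sub>R (u x * u x * exp ((1/2) * (u x)\<^sup>2))"]
      by (auto simp: set_lebesgue_integral_def set_integrable_def)
    then have "?E \<le> (LINT x:{a<..<b}|lborel. (1/2) * (u x * u x * exp ((1/2) * (u x)\<^sup>2)))"
      using exp_diff_le[of 0 "(1/2) * (u _)\<^sup>2"]
      by (intro set_integral_mono True set_integrable_mult_right) (simp_all add: power2_eq_square)
    then show ?thesis by (simp add: set_integral_mult_right)
  next
    case False
    then have "?E = 0" unfolding set_lebesgue_integral_def set_integrable_def
      by (rule not_integrable_integral_eq)
    then show ?thesis using P by simp
  qed
  then show ?thesis
    using mult_left_mono[of ?E "?P / 2" lam] assms(1) unfolding Jfun_def Hnorm_power2 HP by simp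
qed

lemma aJ_le_Jfun:
  assumes "0 < lam" "lam < lambda1 a b" "u \<in> Nehari a b lam"
  shows "aJ a b lam \<le> Jfun a b lam u"
  unfolding aJ_def using Jfun_nonneg_Nehari[OF assms(1,2)] assms(3)
  by (intro cInf_lower bdd_belowI[of _ 0]) auto

definition moser_fun :: "real \<Rightarrow> real \<Rightarrow> real \<Rightarrow> real \<Rightarrow> real" where
  "moser_fun L a b x = moser_profile L ((x - (a + b) / 2) / ((b - a) / 2))"

lemma moser_fun_measurable [measurable]: "moser_fun L a b \<in> borel_measurable borel"
  unfolding moser_fun_def[abs_def] by measurable

lemma moser_fun_bounds: "0 < L \<Longrightarrow> 0 \<le> moser_fun L a b x \<and> moser_fun L a b x \<le> 1"
  using moser_profile_bounds by (simp add: moser_fun_def)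

lemma moser_fun_eq_0:
  assumes "0 < L" "a < b" "x \<notin> {a<..<b}"
  shows "moser_fun L a b x = 0"
proof -
  define c h where "c = (a + b) / 2" and "h = (b - a) / 2"
  have "0 < h" "h \<le> \<bar>x - c\<bar>"
    using assms(2,3) by (auto simp: c_def h_def field_simps abs_if)
  then have "1 \<le> \<bar>(x - c) / h\<bar>" by (simp add: abs_divide le_divide_eq)
  then show ?thesis
    unfolding moser_fun_def c_def[symmetric] h_def[symmetric] by (rule moser_profile_eq_0[OF assms(1)])
qed

lemma moser_fun_eq_1:
  assumes "a < b" "\<bar>x - (a + b) / 2\<bar> \<le> exp (- L) * ((b - a) / 2)"
  shows "moser_fun L a b x = 1"
proof -
  define c h where "c = (a + b) / 2" and "h = (b - a) / 2"
  have "0 < h" "\<bar>x - c\<bar> \<le> exp (- L) * h"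
    using assms by (simp_all add: c_def h_def)
  then have "\<bar>(x - c) / h\<bar> \<le> exp (- L)" by (simp add: abs_divide divide_le_eq)
  then show ?thesis
    unfolding moser_fun_def c_def[symmetric] h_def[symmetric] by (rule moser_profile_eq_1)
qed

lemma fourier_moser_fun:
  assumes "0 < L" "a < b" "\<xi> \<noteq> 0"
  defines "c \<equiv> (a + b) / 2" and "h \<equiv> (b - a) / 2"
  shows "fourier (moser_fun L a b) \<xi> = complex_of_real h * cis (- (c * \<xi>))
    * complex_of_real (2 * (Si (h * \<xi>) - Si (exp (- L) * (h * \<xi>))) / (L * (h * \<xi>)))
    / complex_of_real (sqrt (2 * pi))"
proof -
  have h: "0 < h" using assms(2) by (simp add: h_def)
  have "(LINT x|lborel. complex_of_real (moser_fun L a b x) * cis (- (x * \<xi>)))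
      = \<bar>h\<bar> *\<^sub>R (LINT y|lborel. complex_of_real (moser_fun L a b (c + h * y)) * cis (- ((c + h * y) * \<xi>)))"
    using h by (intro lborel_integral_real_affine) simp
  also have "(\<lambda>y. complex_of_real (moser_fun L a b (c + h * y)) * cis (- ((c + h * y) * \<xi>)))
      = (\<lambda>y. cis (- (c * \<xi>)) * (complex_of_real (moser_profile L y) * cis (- ((h * \<xi>) * y))))"
  proof
    fix y
    have "moser_fun L a b (c + h * y) = moser_profile L y"
      using h by (simp add: moser_fun_def c_def h_def)
    moreover have "cis (- ((c + h * y) * \<xi>)) = cis (- (c * \<xi>)) * cis (- ((h * \<xi>) * y))"
      by (simp add: cis_mult algebra_simps)
    ultimately show "complex_of_real (moser_fun L a b (c + h * y)) * cis (- ((c + h * y) * \<xi>))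
        = cis (- (c * \<xi>)) * (complex_of_real (moser_profile L y) * cis (- ((h * \<xi>) * y)))"
      by simp
  qed
  also have "(LINT y|lborel. cis (- (c * \<xi>)) * (complex_of_real (moser_profile L y) * cis (- ((h * \<xi>) * y))))
      = cis (- (c * \<xi>)) * (LINT y|lborel. complex_of_real (moser_profile L y) * cis (- ((h * \<xi>) * y)))"
    by (rule integral_mult_right_zero)
  also have "(LINT y|lborel. complex_of_real (moser_profile L y) * cis (- ((h * \<xi>) * y)))
      = complex_of_real (2 * (Si (h * \<xi>) - Si (exp (- L) * (h * \<xi>))) / (L * (h * \<xi>)))"
    using h assms(3) by (intro moser_profile_fourier_integral assms(1)) simp
  finally show ?thesis
    using h by (simp add: fourier_def scaleR_conv_of_real)
qed

lemma Hinner_integrand_moser_fun: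
  assumes "0 < L" "a < b"
  shows "\<bar>\<xi>\<bar> * (cmod (fourier (moser_fun L a b) \<xi>))\<^sup>2
    = (b - a) / (pi * L\<^sup>2) * moser_energy_density L ((b - a) / 2 * \<xi>)"
proof (cases "\<xi> = 0")
  case False
  define h where "h = (b - a) / 2"
  define S where "S = Si (h * \<xi>) - Si (exp (- L) * (h * \<xi>))"
  have h: "0 < h" using assms(2) by (simp add: h_def)
  have X: "0 < \<bar>\<xi>\<bar>" using False by simp
  have "cmod (fourier (moser_fun L a b) \<xi>) = 2 * \<bar>S\<bar> / (L * \<bar>\<xi>\<bar>) / sqrt (2 * pi)"
    unfolding fourier_moser_fun[OF assms False] h_def[symmetric] S_def[symmetric]
    using h assms(1) by (simp add: norm_mult norm_divide abs_mult)
  then have "\<bar>\<xi>\<bar> * (cmod (fourier (moser_fun L a b) \<xi>))\<^sup>2 = \<bar>\<xi>\<bar> * (4 * S\<^sup>2 / (L\<^sup>2 * \<bar>\<xi>\<bar>\<^sup>2)) / (2 * pi)"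
    by (simp add: power_divide power_mult_distrib)
  also have "\<dots> = 2 / (pi * L\<^sup>2) * (S\<^sup>2 / \<bar>\<xi>\<bar>)"
    using X assms(1) by (simp add: field_simps power2_eq_square)
  also have "\<dots> = 2 * h / (pi * L\<^sup>2) * (S\<^sup>2 / \<bar>h * \<xi>\<bar>)"
    using h by (simp add: abs_mult)
  finally show ?thesis by (simp add: h_def S_def moser_energy_density_def)
qed (simp add: moser_energy_density_def)

lemma Hinner_moser_fun:
  assumes "0 < L" "a < b"
  shows integrable_Hinner_integrand_moser_fun:
      "integrable lborel (\<lambda>\<xi>. \<bar>\<xi>\<bar> * (cmod (fourier (moser_fun L a b) \<xi>))\<^sup>2)"
    and Hinner_moser_fun_eq:
      "Hinner (moser_fun L a b) (moser_fun L a b) = 2 / (pi * L\<^sup>2) * integral\<^sup>L lborel (moser_energy_density L)"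
proof -
  define h where "h = (b - a) / 2"
  have h: "0 < h" using assms(2) by (simp add: h_def)
  have eq: "(\<lambda>\<xi>. \<bar>\<xi>\<bar> * (cmod (fourier (moser_fun L a b) \<xi>))\<^sup>2)
      = (\<lambda>\<xi>. (b - a) / (pi * L\<^sup>2) * moser_energy_density L (0 + h * \<xi>))"
    using Hinner_integrand_moser_fun[OF assms] by (simp add: h_def)
  have "integrable lborel (\<lambda>\<xi>. moser_energy_density L (0 + h * \<xi>))"
    using lborel_integrable_real_affine_iff[of h "moser_energy_density L" 0] h
      integrable_moser_energy_density[OF assms(1)] by simp
  then show "integrable lborel (\<lambda>\<xi>. \<bar>\<xi>\<bar> * (cmod (fourier (moser_fun L a b) \<xi>))\<^sup>2)"
    unfolding eq by (rule integrable_mult_right)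
  have "integral\<^sup>L lborel (moser_energy_density L) = \<bar>h\<bar> *\<^sub>R (LINT \<xi>|lborel. moser_energy_density L (0 + h * \<xi>))"
    using h by (intro lborel_integral_real_affine) simp
  then have I: "(LINT \<xi>|lborel. moser_energy_density L (0 + h * \<xi>)) = integral\<^sup>L lborel (moser_energy_density L) / h"
    using h by simp
  show "Hinner (moser_fun L a b) (moser_fun L a b) = 2 / (pi * L\<^sup>2) * integral\<^sup>L lborel (moser_energy_density L)"
    unfolding Hinner_def Re_mult_cnj eq integral_mult_right_zero I using h by (simp add: h_def)
qed

lemma Hinner_moser_fun_le:
  obtains K where "0 \<le> K"
    and "\<And>L a b. 0 < L \<Longrightarrow> a < b \<Longrightarrow> Hinner (moser_fun L a b) (moser_fun L a b) \<le> pi / L + K / L\<^sup>2"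
proof
  define C where "C = pi\<^sup>2 / 4 + (pi\<^sup>2 / 4 + 4 * pi + 8) * pi + 8 * pi"
  show "0 \<le> 2 * C / pi" using pi_gt_zero by (simp add: C_def)
  fix L a b :: real
  assume "0 < L" "a < b"
  have "Hinner (moser_fun L a b) (moser_fun L a b) \<le> 2 / (pi * L\<^sup>2) * (pi\<^sup>2 / 2 * L + C)"
    unfolding Hinner_moser_fun_eq[OF \<open>0 < L\<close> \<open>a < b\<close>] C_def
    using integral_moser_energy_density_le[OF \<open>0 < L\<close>] by (intro mult_left_mono) auto
  also have "\<dots> = pi / L + 2 * C / pi / L\<^sup>2"
    using \<open>0 < L\<close> by (simp add: field_simps power2_eq_square)
  finally show "Hinner (moser_fun L a b) (moser_fun L a b) \<le> pi / L + 2 * C / pi / L\<^sup>2" .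
qed

lemma moser_fun_in_Hspace:
  assumes "0 < L" "a < b"
  shows "moser_fun L a b \<in> Hspace a b"
proof -
  have "integrable lborel (\<lambda>x. (moser_fun L a b x)\<^sup>2)"
  proof (rule integrableI_bounded_set[where A = "{a..b}" and B = 1])
    show "AE x in lborel. x \<in> {a..b} \<longrightarrow> norm ((moser_fun L a b x)\<^sup>2) \<le> 1"
      using moser_fun_bounds[OF assms(1)] by (intro AE_I2) (simp add: power_le_one)
    show "AE x in lborel. x \<notin> {a..b} \<longrightarrow> (moser_fun L a b x)\<^sup>2 = 0"
      using moser_fun_eq_0[OF assms] by (intro AE_I2) auto
  qed (use assms in auto)
  moreover have "AE x in lborel. x \<notin> {a<..<b} \<longrightarrow> moser_fun L a b x = 0"
    using moser_fun_eq_0[OF assms] by (intro AE_I2) auto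
  ultimately show ?thesis
    using integrable_Hinner_integrand_moser_fun[OF assms] by (simp add: Hspace_def)
qed

lemma moser_fun_not_Hzero:
  assumes "a < b"
  shows "\<not> Hzero (moser_fun L a b)"
proof
  define r where "r = exp (- L) * ((b - a) / 2)"
  define S where "S = {(a + b) / 2 - r .. (a + b) / 2 + r}"
  have "0 < r" using assms by (simp add: r_def)
  assume "Hzero (moser_fun L a b)"
  then have "AE x in lborel. x \<notin> S"
    unfolding Hzero_def
  proof (rule AE_mp, intro AE_I2 impI notI)
    fix x assume "moser_fun L a b x = 0" "x \<in> S"
    from \<open>x \<in> S\<close> have "\<bar>x - (a + b) / 2\<bar> \<le> r"
      unfolding S_def atLeastAtMost_iff abs_le_iff by linarith
    with moser_fun_eq_1[OF assms, of x L] \<open>moser_fun L a b x = 0\<close> show False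
      by (simp add: r_def)
  qed
  then have "emeasure lborel {x \<in> space lborel. \<not> x \<notin> S} = 0"
    by (subst AE_iff_measurable[symmetric, where P = "\<lambda>x. x \<notin> S"]) (auto simp: S_def)
  then have "emeasure lborel S = 0" by simp
  with \<open>0 < r\<close> show False by (simp add: S_def)
qed

section \<open>Projection onto the Nehari manifold\<close>

lemma Hinner_sqrt_cmult: "0 \<le> t \<Longrightarrow> Hinner (\<lambda>x. sqrt t * w x) (\<lambda>x. sqrt t * w x) = t * Hinner w w"
  by (simp add: Hinner_cmult)

lemma Jderiv_sqrt_cmult:
  assumes "0 \<le> t"
  shows "Jderiv a b lam (\<lambda>x. sqrt t * w x) (\<lambda>x. sqrt t * w x)
    = t * (Hinner w w - lam * (LINT x:{a<..<b}|lborel. (w x)\<^sup>2 * exp (t / 2 * (w x)\<^sup>2)))"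
proof -
  have sq: "(sqrt t * w x)\<^sup>2 = t * (w x)\<^sup>2" for x
    using assms by (simp add: power_mult_distrib)
  then have "sqrt t * w x * (sqrt t * w x) * exp (1 / 2 * (sqrt t * w x)\<^sup>2) = t * ((w x)\<^sup>2 * exp (t / 2 * (w x)\<^sup>2))" for x
    by (simp add: power2_eq_square[symmetric] mult_ac)
  then show ?thesis
    using assms by (simp add: Jderiv_def Hinner_sqrt_cmult algebra_simps)
qed

lemma Jfun_sqrt_cmult:
  assumes "0 \<le> t"
  shows "Jfun a b lam (\<lambda>x. sqrt t * w x)
    = t * Hinner w w / 2 - lam * (LINT x:{a<..<b}|lborel. exp (t / 2 * (w x)\<^sup>2) - 1)"
  using assms by (simp add: Jfun_def Hnorm_power2 Hinner_sqrt_cmult power_mult_distrib)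

lemma Jfun_sqrt_cmult_le:
  assumes "0 \<le> t" "0 \<le> lam" "w \<in> borel_measurable borel" "\<And>x. \<bar>w x\<bar> \<le> 1"
    and "p \<le> q" "{p..q} \<subseteq> {a<..<b}" "\<And>x. x \<in> {p..q} \<Longrightarrow> w x = 1"
  shows "Jfun a b lam (\<lambda>x. sqrt t * w x) \<le> t * Hinner w w / 2 - lam * (q - p) * (exp (t / 2) - 1)"
proof -
  have bound: "1 \<le> exp (t / 2 * (w x)\<^sup>2)" "exp (t / 2 * (w x)\<^sup>2) \<le> exp (t / 2)" for x
    using assms(1) mult_left_le[of "(w x)\<^sup>2" "t / 2"] assms(4)[of x] by (simp_all add: abs_square_le_1)
  have nonneg: "0 \<le> exp (t / 2 * (w x)\<^sup>2) - 1" for x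
    using bound(1)[of x] by linarith
  have "\<bar>exp (t / 2 * (w x)\<^sup>2) - 1\<bar> \<le> exp (t / 2)" for x
    using bound[of x] nonneg[of x] by (simp only: abs_of_nonneg)
  then have "set_integrable lborel {a<..<b} (\<lambda>x. exp (t / 2 * (w x)\<^sup>2) - 1)"
    using assms(3) by (intro set_integrable_bounded[where B = "exp (t / 2)"] emeasure_bounded_finite) auto
  then have "(exp (t / 2) - 1) * (q - p) \<le> (LINT x:{a<..<b}|lborel. exp (t / 2 * (w x)\<^sup>2) - 1)"
    using assms(5,6,7) nonneg[of 0] assms(1)
    by (intro set_integral_ge_on_Icc nonneg emeasure_bounded_finite) auto
  then have "lam * ((exp (t / 2) - 1) * (q - p)) \<le> lam * (LINT x:{a<..<b}|lborel. exp (t / 2 * (w x)\<^sup>2) - 1)"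
    by (rule mult_left_mono[OF _ assms(2)])
  then show ?thesis
    unfolding Jfun_sqrt_cmult[OF assms(1)] by (simp add: mult_ac)
qed

lemma set_integrable_square_exp_square:
  fixes w :: "real \<Rightarrow> real"
  assumes "w \<in> borel_measurable borel" "\<And>x. \<bar>w x\<bar> \<le> 1" "0 \<le> t"
  shows "set_integrable lborel {a<..<b} (\<lambda>x. (w x)\<^sup>2 * exp (t / 2 * (w x)\<^sup>2))"
proof (rule set_integrable_bounded[where B = "exp (t / 2)"])
  fix x
  have "(w x)\<^sup>2 \<le> 1" using assms(2)[of x] by (simp add: abs_square_le_1)
  moreover have "exp (t / 2 * (w x)\<^sup>2) \<le> exp (t / 2)"
    using mult_left_le[OF \<open>(w x)\<^sup>2 \<le> 1\<close>, of "t / 2"] assms(3) by simp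
  ultimately show "\<bar>(w x)\<^sup>2 * exp (t / 2 * (w x)\<^sup>2)\<bar> \<le> exp (t / 2)"
    using mult_mono[of "(w x)\<^sup>2" 1 "exp (t / 2 * (w x)\<^sup>2)" "exp (t / 2)"] by simp
qed (use assms(1) emeasure_bounded_finite[OF bounded_Ioo] in auto)

lemma continuous_on_set_integral_exp_square:
  fixes w :: "real \<Rightarrow> real"
  assumes "w \<in> borel_measurable borel" "\<And>x. \<bar>w x\<bar> \<le> 1"
  shows "continuous_on {0..T} (\<lambda>t. LINT x:{a<..<b}|lborel. (w x)\<^sup>2 * exp (t / 2 * (w x)\<^sup>2))"
proof (rule lipschitz_on_continuous_on)
  have sq: "0 \<le> (w x)\<^sup>2" "(w x)\<^sup>2 \<le> 1" for x
    using assms(2)[of x] by (simp_all add: abs_square_le_1)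
  have le: "t / 2 * (w x)\<^sup>2 \<le> T / 2" if "t \<in> {0..T}" for t x
  proof -
    have "t * (w x)\<^sup>2 \<le> t" using mult_left_le[OF sq(2)[of x], of t] that by simp
    then show ?thesis using that by simp
  qed
  show "(exp (T / 2) / 2 * measure lborel {a<..<b})-lipschitz_on {0..T}
      (\<lambda>t. LINT x:{a<..<b}|lborel. (w x)\<^sup>2 * exp (t / 2 * (w x)\<^sup>2))"
  proof (rule lipschitz_on_set_integral_param)
    show "emeasure lborel {a<..<b} < \<infinity>"
      by (intro emeasure_bounded_finite bounded_Ioo)
    show "set_integrable lborel {a<..<b} (\<lambda>x. (w x)\<^sup>2 * exp (t / 2 * (w x)\<^sup>2))" if "t \<in> {0..T}" for t
      using that by (intro set_integrable_square_exp_square assms) auto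
    fix t s x assume ts: "t \<in> {0..T}" "s \<in> {0..T}"
    have "\<bar>(w x)\<^sup>2 * exp (t / 2 * (w x)\<^sup>2) - (w x)\<^sup>2 * exp (s / 2 * (w x)\<^sup>2)\<bar>
        = (w x)\<^sup>2 * \<bar>exp (t / 2 * (w x)\<^sup>2) - exp (s / 2 * (w x)\<^sup>2)\<bar>"
      by (simp add: abs_mult flip: right_diff_distrib)
    also have "\<dots> \<le> 1 * (\<bar>t / 2 * (w x)\<^sup>2 - s / 2 * (w x)\<^sup>2\<bar> * exp (T / 2))"
      using sq[of x] abs_exp_diff_le[OF le[OF ts(1)] le[OF ts(2)]] by (intro mult_mono) auto
    also have "\<dots> = \<bar>t - s\<bar> / 2 * ((w x)\<^sup>2 * exp (T / 2))"
      by (simp add: abs_mult flip: left_diff_distrib diff_divide_distrib)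
    also have "\<dots> \<le> \<bar>t - s\<bar> / 2 * exp (T / 2)"
      by (intro mult_left_mono mult_left_le_one_le) (use sq[of x] in auto)
    also have "\<dots> = exp (T / 2) / 2 * \<bar>t - s\<bar>"
      by simp
    finally show "\<bar>(w x)\<^sup>2 * exp (t / 2 * (w x)\<^sup>2) - (w x)\<^sup>2 * exp (s / 2 * (w x)\<^sup>2)\<bar>
        \<le> exp (T / 2) / 2 * \<bar>t - s\<bar>" .
  qed simp_all
qed

lemma set_integral_square_exp_square_unbounded:
  fixes w :: "real \<Rightarrow> real"
  assumes "0 < lam" "w \<in> borel_measurable borel" "\<And>x. \<bar>w x\<bar> \<le> 1"
    and "p < q" "{p..q} \<subseteq> {a<..<b}" "\<And>x. x \<in> {p..q} \<Longrightarrow> w x = 1"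
  obtains T where "0 < T" "P < lam * (LINT x:{a<..<b}|lborel. (w x)\<^sup>2 * exp (T / 2 * (w x)\<^sup>2))"
proof -
  define T where "T = 2 * (\<bar>P\<bar> + 1) / (lam * (q - p))"
  have T: "0 < T" using assms(1,4) by (simp add: T_def add_pos_nonneg)
  \<comment> \<open>as \<open>w = 1\<close> on \<open>[p, q]\<close>, the integral is at least \<open>(q - p) exp (T / 2) > (q - p) T / 2 = (\<bar>P\<bar> + 1) / lam\<close>\<close>
  have "exp (T / 2) * (q - p) \<le> (LINT x:{a<..<b}|lborel. (w x)\<^sup>2 * exp (T / 2 * (w x)\<^sup>2))"
    using assms(4-6) T
    by (intro set_integral_ge_on_Icc set_integrable_square_exp_square assms(2,3) emeasure_bounded_finite) auto
  moreover have "T / 2 < exp (T / 2)"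
    using exp_ge_add_one_self[of "T / 2"] by linarith
  then have "(q - p) * (T / 2) < (q - p) * exp (T / 2)"
    using assms(4) by (intro mult_strict_left_mono) auto
  ultimately have "lam * ((q - p) * (T / 2)) < lam * (LINT x:{a<..<b}|lborel. (w x)\<^sup>2 * exp (T / 2 * (w x)\<^sup>2))"
    using assms(1) by (simp add: mult_ac)
  moreover have "lam * ((q - p) * (T / 2)) = \<bar>P\<bar> + 1"
    using assms(1,4) by (simp add: T_def)
  ultimately have "\<bar>P\<bar> + 1 < lam * (LINT x:{a<..<b}|lborel. (w x)\<^sup>2 * exp (T / 2 * (w x)\<^sup>2))"
    by simp
  then show ?thesis using T that by simp
qed

lemma Nehari_sqrt_cmult:
  assumes "0 < lam" "w \<in> Hspace a b" "\<not> Hzero w" "\<And>x. \<bar>w x\<bar> \<le> 1"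
    and "lam * (LINT x:{a<..<b}|lborel. (w x)\<^sup>2) < Hinner w w"
    and "p < q" "{p..q} \<subseteq> {a<..<b}" "\<And>x. x \<in> {p..q} \<Longrightarrow> w x = 1"
  obtains t where "0 < t" "(\<lambda>x. sqrt t * w x) \<in> Nehari a b lam"
proof -
  define \<psi> where "\<psi> t = (LINT x:{a<..<b}|lborel. (w x)\<^sup>2 * exp (t / 2 * (w x)\<^sup>2))" for t
  have w: "w \<in> borel_measurable borel"
    using assms(2) by (simp add: Hspace_def)
  obtain T where T: "0 < T" "Hinner w w < lam * \<psi> T"
    unfolding \<psi>_def by (rule set_integral_square_exp_square_unbounded[OF assms(1) w assms(4,6-8)])
  have "\<psi> 0 = (LINT x:{a<..<b}|lborel. (w x)\<^sup>2)"
    by (simp add: \<psi>_def)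
  with assms(5) have \<psi>0: "lam * \<psi> 0 < Hinner w w" by simp
  have "continuous_on {0..T} (\<lambda>t. Hinner w w - lam * \<psi> t)"
    unfolding \<psi>_def by (intro continuous_intros continuous_on_set_integral_exp_square w assms(4))
  then obtain t where t: "0 \<le> t" "t \<le> T" "Hinner w w - lam * \<psi> t = 0"
    using IVT2'[of "\<lambda>t. Hinner w w - lam * \<psi> t" T 0 0] T \<psi>0 by auto
  then have "0 < t" using \<psi>0 by (cases "t = 0") auto
  have "\<not> Hzero (\<lambda>x. sqrt t * w x)"
    using assms(3) \<open>0 < t\<close> by (simp add: Hzero_def)
  moreover have "Jderiv a b lam (\<lambda>x. sqrt t * w x) (\<lambda>x. sqrt t * w x) = 0"
    using t by (simp add: Jderiv_sqrt_cmult \<psi>_def)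
  ultimately have "(\<lambda>x. sqrt t * w x) \<in> Nehari a b lam"
    using Hspace_cmult[OF assms(2)] by (simp add: Nehari_def)
  with \<open>0 < t\<close> show ?thesis by (rule that)
qed

lemma moser_ray_meets_Nehari:
  assumes "a < b" "0 < lam" "lam < lambda1 a b" "1 \<le> L"
  obtains t where "0 \<le> t" "(\<lambda>x. sqrt t * moser_fun L a b x) \<in> Nehari a b lam"
    "Jfun a b lam (\<lambda>x. sqrt t * moser_fun L a b x)
      \<le> t * Hinner (moser_fun L a b) (moser_fun L a b) / 2 - lam * (b - a) * exp (- L) * (exp (t / 2) - 1)"
proof -
  define w where "w = moser_fun L a b"
  define r where "r = exp (- L) * ((b - a) / 2)"
  have w: "w \<in> Hspace a b" "\<not> Hzero w" "\<And>x. \<bar>w x\<bar> \<le> 1"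
    using moser_fun_in_Hspace[of L a b] moser_fun_not_Hzero[of a b L] moser_fun_bounds[of L a b] assms(1,4)
    by (auto simp: w_def abs_le_iff)
  have "exp (- L) < 1" using assms(4) by simp
  then have "0 < r" "r < (b - a) / 2"
    using assms(1) mult_strict_right_mono[of "exp (- L)" 1 "(b - a) / 2"] by (simp_all add: r_def)
  then have r: "(a + b) / 2 - r < (a + b) / 2 + r" "{(a + b) / 2 - r .. (a + b) / 2 + r} \<subseteq> {a<..<b}"
    by (auto simp: field_simps)
  have w1: "w x = 1" if "x \<in> {(a + b) / 2 - r .. (a + b) / 2 + r}" for x
  proof -
    from that have "\<bar>x - (a + b) / 2\<bar> \<le> r"
      unfolding atLeastAtMost_iff abs_le_iff by linarith
    then show ?thesis unfolding w_def r_def by (rule moser_fun_eq_1[OF assms(1)])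
  qed
  obtain t where t: "0 < t" "(\<lambda>x. sqrt t * w x) \<in> Nehari a b lam"
    using Nehari_sqrt_cmult[OF assms(2) w lambda_integral_square_less_Hinner[OF assms(3) w(1,2)] r w1] .
  have "Jfun a b lam (\<lambda>x. sqrt t * w x) \<le> t * Hinner w w / 2 - lam * (2 * r) * (exp (t / 2) - 1)"
    using Jfun_sqrt_cmult_le[OF less_imp_le[OF t(1)] less_imp_le[OF assms(2)] _ w(3) less_imp_le[OF r(1)] r(2) w1]
      w(1) by (simp add: Hspace_def)
  then show ?thesis
    using that[of t] t by (simp add: w_def r_def mult_ac)
qed

section \<open>The level estimate\<close>

lemma half_linear_minus_exp_le:
  fixes A L P t \<kappa> :: real
  assumes "0 < A" "0 < L" "0 < \<kappa>" "P \<le> \<kappa> / L" "0 \<le> t"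
  shows "t * P / 2 - A * exp (- L) * (exp (t / 2) - 1) \<le> \<kappa> + \<kappa> / L * (ln (\<kappa> / (A * L)) - 1) + A * exp (- L)"
proof -
  have pos: "0 < \<kappa> / L" "0 < A * exp (- L)" "0 < \<kappa> / (A * L)"
    using assms(1-3) by simp_all
  have ln_eq: "ln (\<kappa> / L / (A * exp (- L))) = L + ln (\<kappa> / (A * L))"
  proof -
    have "\<kappa> / L / (A * exp (- L)) = exp L * (\<kappa> / (A * L))"
      by (simp add: exp_minus field_simps)
    then show ?thesis
      using assms(1-3) ln_mult[of "exp L" "\<kappa> / (A * L)"] by simp
  qed
  have "t * P / 2 \<le> t / 2 * (\<kappa> / L)"
    using mult_left_mono[OF assms(4), of "t / 2"] assms(5) by simp
  then have "t * P / 2 - A * exp (- L) * (exp (t / 2) - 1)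
      \<le> (t / 2 * (\<kappa> / L) - A * exp (- L) * exp (t / 2)) + A * exp (- L)"
    by (simp add: algebra_simps)
  also have "\<dots> \<le> \<kappa> / L * (L + ln (\<kappa> / (A * L))) - \<kappa> / L + A * exp (- L)"
    using mult_minus_exp_le[OF pos(1,2), of "t / 2"] ln_eq by simp
  also have "\<dots> = \<kappa> + \<kappa> / L * (ln (\<kappa> / (A * L)) - 1) + A * exp (- L)"
    using assms(2) by (simp add: field_simps)
  finally show ?thesis .
qed

lemma moser_level_below_pi:
  fixes A K L P t :: real
  assumes "0 < A" "0 \<le> K" "1 \<le> L" "(pi + K) * exp (K / pi) \<le> A * L" "A * L < pi * exp L"
    and "P \<le> (pi + K / L) / L" "0 \<le> t"
  shows "t * P / 2 - A * exp (- L) * (exp (t / 2) - 1) < pi"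
proof -
  define \<kappa> where "\<kappa> = pi + K / L"
  have L: "0 < L" using assms(3) by simp
  have "K / L \<le> K"
    using mult_left_mono[of 1 L K] assms(2,3) L by (simp add: divide_le_eq)
  then have \<kappa>: "pi \<le> \<kappa>" "\<kappa> \<le> pi + K"
    using assms(2) L by (simp_all add: \<kappa>_def)
  have "0 < \<kappa>" using \<kappa>(1) pi_gt_zero by linarith
  then have "0 < \<kappa> / (A * L)" using assms(1) L by simp
  have "\<kappa> / (A * L) \<le> (pi + K) / (A * L)"
    using \<kappa>(2) assms(1) L by (simp add: divide_right_mono)
  also have "\<dots> \<le> exp (- (K / pi))"
    using assms(1,4) L by (simp add: exp_minus field_simps)
  finally have "ln (\<kappa> / (A * L)) \<le> - (K / pi)"
    using \<open>0 < \<kappa> / (A * L)\<close> by (metis exp_gt_zero ln_exp ln_le_cancel_iff)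
  then have "\<kappa> / L * (ln (\<kappa> / (A * L)) - 1) \<le> \<kappa> / L * (- (K / pi) - 1)"
    using \<open>0 < \<kappa>\<close> L by (intro mult_left_mono) auto
  also have "\<dots> \<le> pi / L * (- (K / pi) - 1)"
    using \<kappa>(1) L divide_nonneg_pos[OF assms(2) pi_gt_zero]
    by (intro mult_right_mono_neg divide_right_mono) auto
  finally have bound: "\<kappa> / L * (ln (\<kappa> / (A * L)) - 1) \<le> pi / L * (- (K / pi) - 1)" .
  have "P \<le> \<kappa> / L" using assms(6) by (simp add: \<kappa>_def)
  then have "t * P / 2 - A * exp (- L) * (exp (t / 2) - 1) \<le> \<kappa> + \<kappa> / L * (ln (\<kappa> / (A * L)) - 1) + A * exp (- L)"
    by (rule half_linear_minus_exp_le[OF assms(1) L \<open>0 < \<kappa>\<close> _ assms(7)])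
  also have "\<dots> \<le> \<kappa> + pi / L * (- (K / pi) - 1) + A * exp (- L)"
    using bound by simp
  also have "\<dots> = pi - pi / L + A * exp (- L)"
    using pi_gt_zero L by (simp add: \<kappa>_def field_simps)
  also have "\<dots> < pi"
    using assms(5) L by (simp add: exp_minus field_simps)
  finally show ?thesis .
qed

lemma eventually_linear_below_exp:
  fixes A C :: real
  assumes "0 < A"
  shows "eventually (\<lambda>L. 1 \<le> L \<and> C \<le> A * L \<and> A * L < pi * exp L) at_top"
proof -
  have "eventually (\<lambda>L. L ^ 1 / exp L < pi / A) at_top"
    using assms by (intro order_tendstoD(2)[OF tendsto_power_div_exp_0]) simp
  moreover have "eventually (\<lambda>L. C / A \<le> L) at_top" "eventually (\<lambda>L::real. 1 \<le> L) at_top"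
    by (rule eventually_ge_at_top)+
  ultimately show ?thesis
  proof eventually_elim
    case (elim L)
    then show ?case using assms by (simp add: field_simps)
  qed
qed

theorem lemma4p4:
  fixes a b lam :: real
  assumes "a < b" and "0 < lam" and "lam < lambda1 a b"
  shows "aJ a b lam < pi"
proof -
  obtain K where K: "0 \<le> K"
    and energy: "\<And>L a b. 0 < L \<Longrightarrow> a < b \<Longrightarrow> Hinner (moser_fun L a b) (moser_fun L a b) \<le> pi / L + K / L\<^sup>2"
    using Hinner_moser_fun_le by blast
  define A where "A = lam * (b - a)"
  have A: "0 < A" using assms(1,2) by (simp add: A_def)
  obtain L where L: "1 \<le> L" "(pi + K) * exp (K / pi) \<le> A * L" "A * L < pi * exp L"
    using eventually_happens[OF eventually_linear_below_exp[OF A]] by auto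
  obtain t where t: "0 \<le> t" "(\<lambda>x. sqrt t * moser_fun L a b x) \<in> Nehari a b lam"
    "Jfun a b lam (\<lambda>x. sqrt t * moser_fun L a b x)
      \<le> t * Hinner (moser_fun L a b) (moser_fun L a b) / 2 - A * exp (- L) * (exp (t / 2) - 1)"
    using moser_ray_meets_Nehari[OF assms L(1)] unfolding A_def by blast
  have P: "Hinner (moser_fun L a b) (moser_fun L a b) \<le> (pi + K / L) / L"
    using energy[of L a b] L(1) assms(1) by (simp add: power2_eq_square add_divide_distrib)
  have "Jfun a b lam (\<lambda>x. sqrt t * moser_fun L a b x) < pi"
    using moser_level_below_pi[OF A K L P t(1)] t(3) by linarith
  then show ?thesis
    using aJ_le_Jfun[OF assms(2,3) t(2)] by linarith
qed

end
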